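(* Let $\sigma$ be a signature and $\{\varphi_i\mid i\in I\}$ a finite nonempty set of pairwise causally incompatible formulas, all in $\mathcal{COD}[\sigma]$ or all in $\mathcal{CO}_{\sqcup}[\sigma]$. Then $\bigsqcup_{i\in I}\varphi_i\equiv^c\bigvee_{i\in I}\varphi_i$.
   Context: A signature $\sigma=(\mathrm{Dom},\mathrm{Ran})$: $\mathrm{Dom}$ nonempty finite set of variables, each with nonempty finite range $\mathrm{Ran}(X)$; $\mathbf X=\mathbf x$ abbreviates $X_1=x_1\wedge\dots\wedge X_n=x_n$ ($\mathbf x\in\prod\mathrm{Ran}(X_i)$), inconsistent if it contains $X=x,X=x'$ with $x\ne x'$. Languages: $\mathcal{CO}[\sigma]$: $\alpha::=X=x\mid\neg\alpha\mid\alpha\wedge\alpha\mid\alpha\vee\alpha\mid\mathbf X=\mathbf x\;\Box\!\!\rightarrow\alpha$; $\mathcal{CO}_{\sqcup}[\sigma]$: $\varphi::=X=x\mid\neg\alpha\mid\varphi\wedge\varphi\mid\varphi\vee\varphi\mid\varphi\sqcup\varphi\mid\mathbf X=\mathbf x\;\Box\!\!\rightarrow\varphi$; $\mathcal{COD}[\sigma]$: $\varphi::=X=x\mid{=}(\mathbf X;Y)\mid\neg\alpha\mid\varphi\wedge\varphi\mid\varphi\vee\varphi\mid\mathbf X=\mathbf x\;\Box\!\!\rightarrow\varphi$ ($\alpha\in\mathcal{CO}[\sigma]$). Systems of functions $\mathcal F$: for each $V\in\mathrm{En}(\mathcal F)\subseteq\mathrm{Dom}$ parents $PA^{\mathcal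 F}_V\subseteq\mathrm{Dom}\setminus\{V\}$ and $\mathcal F_V:\mathrm{Ran}(PA^{\mathcal F}_V)\to\mathrm{Ran}(V)$; $\mathrm{Ex}(\mathcal F)=\mathrm{Dom}\setminus\mathrm{En}(\mathcal F)$; only recursive (acyclic parent graph). An assignment $s$ is compatible with $\mathcal F$ if $s(V)=\mathcal F_V(s(PA^{\mathcal F}_V))$ for $V\in\mathrm{En}(\mathcal F)$. A causal team $T=(T^-,\mathcal F)$: a recursive $\mathcal F$ and a set $T^-$ of compatible assignments (empty team components identified as $\emptyset$); causal subteams $(S^-,\mathcal F)$ with $S^-\subseteq T^-$. For consistent $\mathbf X=\mathbf x$: $\mathcal F_{\mathbf X=\mathbf x}$ restricts $\mathcal F$ to $\mathrm{En}(\mathcal F)\setminus\mathbf X$; $s^{\mathcal F}_{\mathbf X=\mathbf x}$: $X_i\mapsto x_i$, $V\mapsto s(V)$ on $\mathrm{Ex}(\mathcal F)\setminus\mathbf X$, $V\mapsto\mathcal F_V(s^{\mathcal F}_{\mathbf X=\mathbf x}(PA^{\mathcal F}_V))$ on $\mathrm{En}(\mathcal F)\setminus\mathbf X$; $T_{\mathbf X=\mathbf x}=(\{s^{\mathcal F}_{\mathbf X=\mathbf x}:s\in T^-\},\mathcal F_{\mathbf X=\mathbf x})$. $\models^c$: $T\models X=x$ iff $s(X)=x$ for all $s\in T^-$; $T\models{=}(\mathbf X;Y)$ iff for all $s,s'\in T^-$, $s(\mathbf X)=s'(\mathbf X)$ implies $s(Y)=s'(Y)$; $T\models\neg\alpha$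 iff $(\{s\},\mathcal F)\not\models\alpha$ for all $s\in T^-$; $\wedge$ classical; $T\models\varphi\vee\psi$ iff there are causal subteams $T_1,T_2$ with $T_1^-\cup T_2^-=T^-$, $T_1\models\varphi$, $T_2\models\psi$; $T\models\varphi\sqcup\psi$ iff $T\models\varphi$ or $T\models\psi$; $T\models\mathbf X=\mathbf x\;\Box\!\!\rightarrow\varphi$ iff $\mathbf X=\mathbf x$ inconsistent or $T_{\mathbf X=\mathbf x}\models\varphi$. $\varphi\equiv^c\psi$: same causal teams over $\sigma$ satisfy both. $\mathrm{Cn}(\mathcal F)=\{V\in\mathrm{En}(\mathcal F):\mathcal F_V\text{ constant}\}$; $\mathcal F_V\sim\mathcal G_V$ iff $\mathcal F_V(\mathbf x\mathbf y)=\mathcal G_V(\mathbf x\mathbf z)$ for all $\mathbf x\in\mathrm{Ran}(PA^{\mathcal F}_V\cap PA^{\mathcal G}_V)$, $\mathbf y\in\mathrm{Ran}(PA^{\mathcal F}_V\setminus PA^{\mathcal G}_V)$, $\mathbf z\in\mathrm{Ran}(PA^{\mathcal G}_V\setminus PA^{\mathcal F}_V)$; $\mathcal F\sim\mathcal G$ iff $\mathrm{En}(\mathcal F)\setminus\mathrm{Cn}(\mathcal F)=\mathrm{En}(\mathcal G)\setminus\mathrm{Cn}(\mathcal G)$ and $\mathcal F_V\sim\mathcal G_V$ for each such $V$. Formulas $\varphi,\psi$ are (causally) incompatible if for all nonempty causal teams $S=(S^-,\mathcal F)$, $T=(T^-,\mathcal G)$ over $\sigma$, $S\models^c\varphi$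 and $T\models^c\psi$ imply $\mathcal F\not\sim\mathcal G$. *)

theory Defs
  imports Main
begin

text \<open>The domain Dom of the signature is the universe of a finite type 'v (so it is a
nonempty finite set of variables); Ran assigns to each variable its range.\<close>

definition signature :: "('v::finite \<Rightarrow> 'a set) \<Rightarrow> bool" where
  "signature Ran \<longleftrightarrow> (\<forall>X. finite (Ran X) \<and> Ran X \<noteq> {})"

definition assignment :: "('v \<Rightarrow> 'a set) \<Rightarrow> ('v \<Rightarrow> 'a) \<Rightarrow> bool" where
  "assignment Ran s \<longleftrightarrow> (\<forall>X. s X \<in> Ran X)"

text \<open>One syntax tree for all connectives; the languages are carved out by predicates.
  Eq X x is the atom X = x; Dep Xs Y is the dependence atom =(Xs;Y); Tor is the
  global disjunction; Or is the tensor disjunction; Cf xs phi is the counterfactual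
  (X1=x1 and ... and Xn=xn) box-arrow phi.\<close>
datatype ('v, 'a) fml =
    Eq 'v 'a
  | Dep "'v list" 'v
  | Neg "('v, 'a) fml"
  | And "('v, 'a) fml" "('v, 'a) fml"
  | Or "('v, 'a) fml" "('v, 'a) fml"
  | Tor "('v, 'a) fml" "('v, 'a) fml"
  | Cf "('v \<times> 'a) list" "('v, 'a) fml"

fun is_CO :: "('v, 'a) fml \<Rightarrow> bool" where
  "is_CO (Eq X x) = True"
| "is_CO (Dep Xs Y) = False"
| "is_CO (Neg a) = is_CO a"
| "is_CO (And a b) = (is_CO a \<and> is_CO b)"
| "is_CO (Or a b) = (is_CO a \<and> is_CO b)"
| "is_CO (Tor a b) = False"
| "is_CO (Cf xs a) = is_CO a"

fun is_COsq :: "('v, 'a) fml \<Rightarrow> bool" where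
  "is_COsq (Eq X x) = True"
| "is_COsq (Dep Xs Y) = False"
| "is_COsq (Neg a) = is_CO a"
| "is_COsq (And a b) = (is_COsq a \<and> is_COsq b)"
| "is_COsq (Or a b) = (is_COsq a \<and> is_COsq b)"
| "is_COsq (Tor a b) = (is_COsq a \<and> is_COsq b)"
| "is_COsq (Cf xs a) = is_COsq a"

fun is_COD :: "('v, 'a) fml \<Rightarrow> bool" where
  "is_COD (Eq X x) = True"
| "is_COD (Dep Xs Y) = True"
| "is_COD (Neg a) = is_CO a"
| "is_COD (And a b) = (is_COD a \<and> is_COD b)"
| "is_COD (Or a b) = (is_COD a \<and> is_COD b)"
| "is_COD (Tor a b) = False"
| "is_COD (Cf xs a) = is_COD a"

text \<open>Formulas over the signature: values occurring in atoms and antecedents lie in the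
  ranges of the respective variables; antecedents are nonempty conjunctions.\<close>
fun wf_fml :: "('v \<Rightarrow> 'a set) \<Rightarrow> ('v, 'a) fml \<Rightarrow> bool" where
  "wf_fml Ran (Eq X x) = (x \<in> Ran X)"
| "wf_fml Ran (Dep Xs Y) = True"
| "wf_fml Ran (Neg a) = wf_fml Ran a"
| "wf_fml Ran (And a b) = (wf_fml Ran a \<and> wf_fml Ran b)"
| "wf_fml Ran (Or a b) = (wf_fml Ran a \<and> wf_fml Ran b)"
| "wf_fml Ran (Tor a b) = (wf_fml Ran a \<and> wf_fml Ran b)"
| "wf_fml Ran (Cf xs a) = (xs \<noteq> [] \<and> (\<forall>(X, x) \<in> set xs. x \<in> Ran X) \<and> wf_fml Ran a)"

fun BigTor :: "('v, 'a) fml list \<Rightarrow> ('v, 'a) fml" where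
  "BigTor [] = Neg (Eq undefined undefined)"
| "BigTor [a] = a"
| "BigTor (a # b # xs) = Tor a (BigTor (b # xs))"

fun BigOr :: "('v, 'a) fml list \<Rightarrow> ('v, 'a) fml" where
  "BigOr [] = Neg (Eq undefined undefined)"
| "BigOr [a] = a"
| "BigOr (a # b # xs) = Or a (BigOr (b # xs))"

text \<open>sf_fn F V is F_V, applied to a full assignment; well-formedness requires that it
  depends only on the values of the parents.\<close>
record ('v, 'a) sysf =
  sf_en :: "'v set"
  sf_pa :: "'v \<Rightarrow> 'v set"
  sf_fn :: "'v \<Rightarrow> ('v \<Rightarrow> 'a) \<Rightarrow> 'a"

definition recursive_sys :: "('v \<Rightarrow> 'a set) \<Rightarrow> ('v, 'a) sysf \<Rightarrow> bool" where
  "recursive_sys Ran F \<longleftrightarrow>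
     (\<forall>V \<in> sf_en F. V \<notin> sf_pa F V) \<and>
     (\<forall>V \<in> sf_en F. \<forall>s t. assignment Ran s \<longrightarrow> assignment Ran t \<longrightarrow>
         (\<forall>X \<in> sf_pa F V. s X = t X) \<longrightarrow> sf_fn F V s = sf_fn F V t) \<and>
     (\<forall>V \<in> sf_en F. \<forall>s. assignment Ran s \<longrightarrow> sf_fn F V s \<in> Ran V) \<and>
     acyclic {(X, V). V \<in> sf_en F \<and> X \<in> sf_pa F V}"

definition compatible :: "('v, 'a) sysf \<Rightarrow> ('v \<Rightarrow> 'a) \<Rightarrow> bool" where
  "compatible F s \<longleftrightarrow> (\<forall>V \<in> sf_en F. s V = sf_fn F V s)"

definition causal_team :: "('v \<Rightarrow> 'a set) \<Rightarrow> ('v, 'a) sysf \<Rightarrow> ('v \<Rightarrow> 'a) set \<Rightarrow> bool" where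
  "causal_team Ran F T \<longleftrightarrow> recursive_sys Ran F \<and>
     (\<forall>s \<in> T. assignment Ran s \<and> compatible F s)"

definition consistent :: "('v \<times> 'a) list \<Rightarrow> bool" where
  "consistent xs \<longleftrightarrow> (\<forall>(X, x) \<in> set xs. \<forall>(Y, y) \<in> set xs. X = Y \<longrightarrow> x = y)"

definition int_sys :: "('v, 'a) sysf \<Rightarrow> ('v \<times> 'a) list \<Rightarrow> ('v, 'a) sysf" where
  "int_sys F xs = F\<lparr>sf_en := sf_en F - fst ` set xs\<rparr>"

text \<open>The intervened assignment s^F_{X=x}: the unique assignment that sends X_i to x_i,
  agrees with s on the exogenous non-intervened variables and is computed by F on the
  endogenous non-intervened variables (well-defined by recursiveness).\<close>
definition int_asg :: "('v \<Rightarrow> 'a set) \<Rightarrow> ('v, 'a) sysf \<Rightarrow> ('v \<times> 'a) list \<Rightarrow> ('v \<Rightarrow> 'a) \<Rightarrow> ('v \<Rightarrow> 'a)" where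
  "int_asg Ran F xs s = (THE t. assignment Ran t \<and>
      (\<forall>(X, x) \<in> set xs. t X = x) \<and>
      (\<forall>V. V \<notin> sf_en F \<and> V \<notin> fst ` set xs \<longrightarrow> t V = s V) \<and>
      (\<forall>V. V \<in> sf_en F \<and> V \<notin> fst ` set xs \<longrightarrow> t V = sf_fn F V t))"

primrec sat :: "('v \<Rightarrow> 'a set) \<Rightarrow> ('v, 'a) sysf \<Rightarrow> ('v \<Rightarrow> 'a) set \<Rightarrow> ('v, 'a) fml \<Rightarrow> bool" where
  "sat Ran F T (Eq X x) = (\<forall>s \<in> T. s X = x)"
| "sat Ran F T (Dep Xs Y) = (\<forall>s \<in> T. \<forall>s' \<in> T. (\<forall>X \<in> set Xs. s X = s' X) \<longrightarrow> s Y = s' Y)"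
| "sat Ran F T (Neg a) = (\<forall>s \<in> T. \<not> sat Ran F {s} a)"
| "sat Ran F T (And a b) = (sat Ran F T a \<and> sat Ran F T b)"
| "sat Ran F T (Or a b) = (\<exists>T1 T2. T1 \<subseteq> T \<and> T2 \<subseteq> T \<and> T1 \<union> T2 = T \<and> sat Ran F T1 a \<and> sat Ran F T2 b)"
| "sat Ran F T (Tor a b) = (sat Ran F T a \<or> sat Ran F T b)"
| "sat Ran F T (Cf xs a) = (\<not> consistent xs \<or> sat Ran (int_sys F xs) (int_asg Ran F xs ` T) a)"

definition equiv_c :: "('v \<Rightarrow> 'a set) \<Rightarrow> ('v, 'a) fml \<Rightarrow> ('v, 'a) fml \<Rightarrow> bool" where
  "equiv_c Ran a b \<longleftrightarrow> (\<forall>F T. causal_team Ran F T \<longrightarrow> (sat Ran F T a \<longleftrightarrow> sat Ran F T b))"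

definition Cn :: "('v \<Rightarrow> 'a set) \<Rightarrow> ('v, 'a) sysf \<Rightarrow> 'v set" where
  "Cn Ran F = {V \<in> sf_en F. \<forall>s t. assignment Ran s \<longrightarrow> assignment Ran t \<longrightarrow>
                                  sf_fn F V s = sf_fn F V t}"

text \<open>F_V ~ G_V: the functions agree on all inputs that agree on the shared parents
  (extra parents of either side vary independently).\<close>
definition sim_fun :: "('v \<Rightarrow> 'a set) \<Rightarrow> ('v, 'a) sysf \<Rightarrow> ('v, 'a) sysf \<Rightarrow> 'v \<Rightarrow> bool" where
  "sim_fun Ran F G V \<longleftrightarrow> (\<forall>s t. assignment Ran s \<longrightarrow> assignment Ran t \<longrightarrow>
       (\<forall>X \<in> sf_pa F V \<inter> sf_pa G V. s X = t X) \<longrightarrow> sf_fn F V s = sf_fn G V t)"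

definition sim_sys :: "('v \<Rightarrow> 'a set) \<Rightarrow> ('v, 'a) sysf \<Rightarrow> ('v, 'a) sysf \<Rightarrow> bool" where
  "sim_sys Ran F G \<longleftrightarrow> sf_en F - Cn Ran F = sf_en G - Cn Ran G \<and>
     (\<forall>V \<in> sf_en F - Cn Ran F. sim_fun Ran F G V)"

definition incompatible :: "('v \<Rightarrow> 'a set) \<Rightarrow> ('v, 'a) fml \<Rightarrow> ('v, 'a) fml \<Rightarrow> bool" where
  "incompatible Ran a b \<longleftrightarrow> (\<forall>F S G T. causal_team Ran F S \<longrightarrow> S \<noteq> {} \<longrightarrow>
       causal_team Ran G T \<longrightarrow> T \<noteq> {} \<longrightarrow> sat Ran F S a \<longrightarrow> sat Ran G T b \<longrightarrow>
       \<not> sim_sys Ran F G)"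

end

theory Submission
  imports Defs
begin

text \<open>If a team satisfies the tensor disjunction, split it into subteams \<open>T\<^sub>i \<Turnstile> \<phi>\<^sub>i\<close>.
  All subteams carry the same system of functions \<open>\<F>\<close>, and \<open>\<F> \<sim> \<F>\<close>, so pairwise
  incompatibility allows at most one of them to be nonempty; that one is the whole team.
  Conversely, a team satisfying \<open>\<phi>\<^sub>i\<close> splits as itself for \<open>\<phi>\<^sub>i\<close> and the empty team for
  the other disjuncts. The paper restricts to \<open>\<C>\<O>\<D>\<close> or \<open>\<C>\<O>\<^sub>\<squnion>\<close> only to have the empty team
  property, which under these semantics holds for every formula.\<close>

lemma sat_empty_team: "sat Ran F {} \<phi>"
  by (induction \<phi> arbitrary: F) auto

lemma causal_team_subset: "causal_team Ran F T \<Longrightarrow> S \<subseteq> T \<Longrightarrow> causal_team Ran F S"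
  unfolding causal_team_def by auto

lemma sim_sys_refl:
  assumes "recursive_sys Ran F"
  shows "sim_sys Ran F F"
proof -
  have "\<forall>V \<in> sf_en F. \<forall>s t. assignment Ran s \<longrightarrow> assignment Ran t \<longrightarrow>
          (\<forall>X \<in> sf_pa F V. s X = t X) \<longrightarrow> sf_fn F V s = sf_fn F V t"
    using assms unfolding recursive_sys_def by blast
  then show ?thesis
    unfolding sim_sys_def sim_fun_def Int_absorb by blast
qed

lemma incompatible_same_system_empty:
  assumes "incompatible Ran \<phi> \<psi>"
    and "causal_team Ran F S" "sat Ran F S \<phi>"
    and "causal_team Ran F T" "sat Ran F T \<psi>"
  shows "S = {} \<or> T = {}"
proof -
  have "sim_sys Ran F F"
    using assms(2) sim_sys_refl unfolding causal_team_def by blast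
  then show ?thesis
    using assms unfolding incompatible_def by blast
qed

lemma sat_BigTor_iff:
  "phis \<noteq> [] \<Longrightarrow> sat Ran F T (BigTor phis) \<longleftrightarrow> (\<exists>\<phi> \<in> set phis. sat Ran F T \<phi>)"
  by (induction phis rule: BigTor.induct) auto

lemma sat_BigOr_if_member:
  "\<phi> \<in> set phis \<Longrightarrow> sat Ran F T \<phi> \<Longrightarrow> sat Ran F T (BigOr phis)"
proof (induction phis rule: BigOr.induct)
  case (3 a b xs)
  show ?case
  proof (cases "\<phi> = a")
    case True
    then have "sat Ran F T a \<and> sat Ran F {} (BigOr (b # xs))"
      using "3.prems"(2) sat_empty_team by blast
    then show ?thesis
      by (simp only: BigOr.simps sat.simps) (intro exI[of _ T] exI[of _ "{}"]; simp)
  next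
    case False
    then have "sat Ran F {} a \<and> sat Ran F T (BigOr (b # xs))"
      using 3 sat_empty_team by simp
    then show ?thesis
      by (simp only: BigOr.simps sat.simps) (intro exI[of _ "{}"] exI[of _ T]; simp)
  qed
qed auto

lemma sat_BigOr_imp_member:
  assumes "phis \<noteq> []" "distinct phis" "pairwise (incompatible Ran) (set phis)"
    and "causal_team Ran F T" "sat Ran F T (BigOr phis)"
  shows "\<exists>\<phi> \<in> set phis. sat Ran F T \<phi>"
  using assms
proof (induction phis arbitrary: T rule: BigOr.induct)
  case (3 a b xs)
  obtain T1 T2 where split: "T1 \<union> T2 = T" "T1 \<subseteq> T" "T2 \<subseteq> T"
    and sat_a: "sat Ran F T1 a" and sat_rest: "sat Ran F T2 (BigOr (b # xs))"
    using "3.prems"(5) by auto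
  have team1: "causal_team Ran F T1" and team2: "causal_team Ran F T2"
    using "3.prems"(4) split causal_team_subset by blast+
  have rest_incompatible: "pairwise (incompatible Ran) (set (b # xs))"
    using "3.prems"(3) pairwise_subset by (metis set_subset_Cons)
  obtain \<psi> where \<psi>: "\<psi> \<in> set (b # xs)" "sat Ran F T2 \<psi>"
    using "3.IH"[OF _ _ rest_incompatible team2 sat_rest] "3.prems"(2) by auto
  have "a \<noteq> \<psi>"
    using "3.prems"(2) \<psi>(1) by auto
  then have "incompatible Ran a \<psi>"
    using "3.prems"(3) \<psi>(1) unfolding pairwise_def by auto
  then have "T1 = {} \<or> T2 = {}"
    using incompatible_same_system_empty team1 sat_a team2 \<psi>(2) by blast
  then show ?case
    using split sat_a \<psi> by auto
qed auto

theorem lemma3p9: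
  fixes Ran :: "'v::finite \<Rightarrow> 'a set" and phis :: "('v, 'a) fml list"
  assumes "signature Ran"
    and "phis \<noteq> []"
    and "distinct phis"
    and "(\<forall>\<phi> \<in> set phis. is_COD \<phi> \<and> wf_fml Ran \<phi>) \<or> (\<forall>\<phi> \<in> set phis. is_COsq \<phi> \<and> wf_fml Ran \<phi>)"
    and "\<forall>i < length phis. \<forall>j < length phis. i \<noteq> j \<longrightarrow> incompatible Ran (phis ! i) (phis ! j)"
  shows "equiv_c Ran (BigTor phis) (BigOr phis)"
proof -
  have pairwise_incompatible: "pairwise (incompatible Ran) (set phis)"
  proof (rule pairwiseI)
    fix \<phi> \<psi> assume "\<phi> \<in> set phis" "\<psi> \<in> set phis" "\<phi> \<noteq> \<psi>"
    then obtain i j where "i < length phis" "j < length phis" "i \<noteq> j"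
      and "\<phi> = phis ! i" "\<psi> = phis ! j"
      by (metis in_set_conv_nth)
    then show "incompatible Ran \<phi> \<psi>"
      using assms(5) by blast
  qed
  show ?thesis
    unfolding equiv_c_def
    using sat_BigTor_iff[OF assms(2)] sat_BigOr_if_member
      sat_BigOr_imp_member[OF assms(2,3) pairwise_incompatible]
    by blast
qed

end
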